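(* Let $m$ be a positive integer, $b\in\mathbb{F}_{2^{2m}}$, and let $\gamma$ be a primitive element of $\mathbb{F}_{2^{2m}}$. Put $t=\frac{2^{2m}-1}{3}$. Then $g(x)=x^{t+1}+bx$ is a permutation polynomial of $\mathbb{F}_{2^{2m}}$ if and only if \[ b\neq \frac{\gamma^{t i'}\left(\gamma^{3(k-k')+\frac{2^{2m}+2}{3}(i-i')}+1\right)}{\gamma^{3(k-k')+i-i'}+1}\quad\text{and}\quad b\neq\gamma^{ts} \] for all integers $i,i'$ with $0\le i,i'\le 2$, $i\neq i'$, all $s$ with $0\le s\le 2$, and all $k,k'$ with $1\le k,k'\le t$.
   Context: A polynomial is a permutation polynomial of a finite field if it induces a bijection of that field. Note $3\mid 2^{2m}-1$, so $t$ is an integer. *)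

theory Defs
  imports "HOL-Computational_Algebra.Polynomial"
begin

definition permutation_polynomial :: "'a::comm_semiring_0 poly \<Rightarrow> bool" where
  "permutation_polynomial p \<longleftrightarrow> bij (poly p)"

definition primitive_element :: "'a::field \<Rightarrow> bool" where
  "primitive_element \<gamma> \<longleftrightarrow> \<gamma> \<noteq> 0 \<and> (\<forall>x. x \<noteq> 0 \<longrightarrow> (\<exists>n::nat. x = \<gamma> ^ n))"

end

theory Submission
  imports Defs
begin

text \<open>
  Write \<open>g x = x * (x ^ t + b)\<close>. Since \<open>x ^ (3 * t) = 1\<close> for \<open>x \<noteq> 0\<close>, the value \<open>x ^ t\<close>
  is one of the three cube roots of unity \<open>\<gamma> ^ (t * s)\<close>. In characteristic 2,
  \<open>g x = g y\<close> amounts to \<open>(x + y) * b = x * x ^ t + y * y ^ t\<close>. Hence \<open>g\<close> is injective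
  iff it has no nonzero root (\<open>b \<noteq> x ^ t\<close>) and no two nonzero \<open>x, y\<close> with
  \<open>x ^ t \<noteq> y ^ t\<close> satisfy \<open>b = (x * x ^ t + y * y ^ t) / (x + y)\<close>; when \<open>x ^ t = y ^ t\<close> the
  equation just says \<open>b = x ^ t\<close> again. Parametrising \<open>x = \<gamma> ^ (3 * (k - 1) + i)\<close>, so that
  \<open>x ^ t = \<gamma> ^ (t * i)\<close>, turns this quotient into the expression of the statement.
\<close>

lemma nonzero_power_card_minus_one:
  fixes x :: "'a::{field,finite}"
  assumes "x \<noteq> 0"
  shows "x ^ (card (UNIV :: 'a set) - 1) = 1"
proof -
  have "(\<Prod>y\<in>UNIV - {0}. x * y) = (\<Prod>y\<in>UNIV - {0::'a}. y)"
    by (rule prod.reindex_bij_witness[of _ "\<lambda>y. y / x" "\<lambda>y. x * y"]) (use assms in auto)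
  moreover have "(\<Prod>y\<in>UNIV - {0}. x * y) = x ^ (card (UNIV :: 'a set) - 1) * (\<Prod>y\<in>UNIV - {0::'a}. y)"
    by (simp add: prod.distrib card_Diff_singleton)
  moreover have "(\<Prod>y\<in>UNIV - {0::'a}. y) \<noteq> 0"
    by simp
  ultimately show ?thesis
    by simp
qed

lemma two_le_card_field: "2 \<le> card (UNIV :: 'a::{field,finite} set)"
  using card_mono[of UNIV "{0::'a, 1}"] by simp

lemma minus_one_eq_one_if_even_card:
  assumes "even (card (UNIV :: 'a::{field,finite} set))"
  shows "(-1::'a) = 1"
proof -
  have "odd (card (UNIV :: 'a set) - 1)"
    using assms two_le_card_field[where 'a='a] by simp
  then have "(-1::'a) ^ (card (UNIV :: 'a set) - 1) = -1"
    by simp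
  then show ?thesis
    using nonzero_power_card_minus_one[of "-1::'a"] by simp
qed

lemma char_two_add_eq_0_iff:
  fixes u v :: "'a::ring_1"
  assumes "(-1::'a) = 1"
  shows "u + v = 0 \<longleftrightarrow> u = v"
proof -
  have "- v = (-1) * v"
    by simp
  then have "- v = v"
    using assms by simp
  then show ?thesis
    using eq_neg_iff_add_eq_0[of u v] by simp
qed

lemma inj_times_power_add_iff:
  fixes b :: "'a::field"
  assumes char_two: "(-1::'a) = 1"
  shows "inj (\<lambda>x. x * (x ^ t + b)) \<longleftrightarrow>
    (\<forall>x. x \<noteq> 0 \<longrightarrow> x ^ t \<noteq> b) \<and>
    (\<forall>x y. x \<noteq> 0 \<longrightarrow> y \<noteq> 0 \<longrightarrow> x ^ t \<noteq> y ^ t \<longrightarrow> b \<noteq> (x * x ^ t + y * y ^ t) / (x + y))"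
    (is "inj ?g \<longleftrightarrow> ?Z \<and> ?Q")
proof -
  note add_eq_0 = char_two_add_eq_0_iff[OF char_two]
  have g_eq_iff: "?g x = ?g y \<longleftrightarrow> (x + y) * b = x * x ^ t + y * y ^ t" for x y
  proof -
    have "?g x + ?g y = (x + y) * b + (x * x ^ t + y * y ^ t)"
      by (simp add: algebra_simps)
    then show ?thesis
      by (metis add_eq_0)
  qed
  have sum_ne_0: "x + y \<noteq> 0" if "x \<noteq> y" for x y :: 'a
    using that add_eq_0 by blast
  show ?thesis
  proof (intro iffI conjI allI impI notI)
    fix x assume "inj ?g" "x \<noteq> 0" "x ^ t = b"
    moreover have "b + b = 0"
      using add_eq_0[of b b] by simp
    ultimately have "?g x = ?g 0"
      by simp
    then show False
      using \<open>inj ?g\<close> \<open>x \<noteq> 0\<close> by (meson injD)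
  next
    fix x y assume "inj ?g" "x ^ t \<noteq> y ^ t"
      and b: "b = (x * x ^ t + y * y ^ t) / (x + y)"
    then have "x \<noteq> y"
      by blast
    moreover have "(x + y) * b = x * x ^ t + y * y ^ t"
      using sum_ne_0[OF \<open>x \<noteq> y\<close>] by (simp add: b)
    then have "?g x = ?g y"
      using g_eq_iff by blast
    ultimately show False
      using \<open>inj ?g\<close> by (meson injD)
  next
    assume "?Z \<and> ?Q"
    then have Z: ?Z and Q: ?Q
      by blast+
    show "inj ?g"
    proof (rule injI, rule ccontr)
      fix x y assume "?g x = ?g y" "x \<noteq> y"
      then have b: "(x + y) * b = x * x ^ t + y * y ^ t" and xy: "x + y \<noteq> 0"
        using g_eq_iff sum_ne_0 by blast+
      have "y \<noteq> 0 \<Longrightarrow> y ^ t \<noteq> b" "x \<noteq> 0 \<Longrightarrow> x ^ t \<noteq> b"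
        using Z by blast+
      then have "x \<noteq> 0" "y \<noteq> 0"
        using b \<open>x \<noteq> y\<close> by auto
      show False
      proof (cases "x ^ t = y ^ t")
        case True
        then have "(x + y) * b = (x + y) * x ^ t"
          using b by (simp add: algebra_simps)
        then have "b = x ^ t"
          using xy by simp
        then show False
          using Z \<open>x \<noteq> 0\<close> by blast
      next
        case False
        have "b = (x * x ^ t + y * y ^ t) / (x + y)"
          using b xy by (simp add: eq_divide_eq mult.commute)
        then show False
          using Q \<open>x \<noteq> 0\<close> \<open>y \<noteq> 0\<close> False by blast
      qed
    qed
  qed
qed

text \<open>No hypothesis on the denominators is needed: \<open>\<gamma> powi (a - a') + 1\<close> vanishes exactly
  when \<open>\<gamma> powi a + \<gamma> powi a'\<close> does, and then both sides are \<open>0\<close>.\<close>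

lemma power_int_quotient_eq:
  fixes \<gamma> :: "'a::field" and a a' e e' :: int
  assumes "\<gamma> \<noteq> 0"
  shows "\<gamma> powi e' * (\<gamma> powi (a + e - (a' + e')) + 1) / (\<gamma> powi (a - a') + 1)
       = (\<gamma> powi a * \<gamma> powi e + \<gamma> powi a' * \<gamma> powi e') / (\<gamma> powi a + \<gamma> powi a')"
proof -
  have nz: "\<gamma> powi a' \<noteq> 0" "\<gamma> powi e' \<noteq> 0"
    using assms by auto
  have "\<gamma> powi e' * (\<gamma> powi (a + e - (a' + e')) + 1) = (\<gamma> powi a * \<gamma> powi e + \<gamma> powi a' * \<gamma> powi e') / \<gamma> powi a'"
    using assms nz by (simp add: power_int_diff power_int_add field_simps)
  moreover have "\<gamma> powi (a - a') + 1 = (\<gamma> powi a + \<gamma> powi a') / \<gamma> powi a'"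
    using assms nz by (simp add: power_int_diff field_simps)
  ultimately show ?thesis
    using nz by simp
qed

lemma all_digits_iff_all_below:
  fixes d t :: nat
  assumes "d > 0"
  shows "(\<forall>i k :: int. 0 \<le> i \<and> i < int d \<and> 1 \<le> k \<and> k \<le> int t \<longrightarrow> P i k) \<longleftrightarrow>
    (\<forall>n < d * t. P (int (n mod d)) (int (n div d) + 1))"
proof (intro iffI allI impI)
  fix n assume all: "\<forall>i k :: int. 0 \<le> i \<and> i < int d \<and> 1 \<le> k \<and> k \<le> int t \<longrightarrow> P i k"
    and "n < d * t"
  then have "n div d < t"
    by (metis less_mult_imp_div_less mult.commute)
  then show "P (int (n mod d)) (int (n div d) + 1)"
    using all assms by simp
next
  fix i k :: int
  assume all: "\<forall>n < d * t. P (int (n mod d)) (int (n div d) + 1)"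
    and range: "0 \<le> i \<and> i < int d \<and> 1 \<le> k \<and> k \<le> int t"
  define r j where "r = nat i" and "j = nat (k - 1)"
  have ij: "i = int r" "k = int j + 1"
    using range by (simp_all add: r_def j_def)
  then have "r < d" "j < t"
    using range by simp_all
  have "d * j + r < d * Suc j"
    using \<open>r < d\<close> by simp
  also have "\<dots> \<le> d * t"
    using \<open>j < t\<close> by (intro mult_le_mono2) simp
  finally have "P (int ((d * j + r) mod d)) (int ((d * j + r) div d) + 1)"
    using all by blast
  then show "P i k"
    using ij \<open>r < d\<close> by simp
qed

context
  fixes \<gamma> :: "'a::{field,finite}"
  assumes primitive: "primitive_element \<gamma>"
begin

lemma primitive_element_power_mod:
  "\<gamma> ^ n = \<gamma> ^ (n mod (card (UNIV :: 'a set) - 1))"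
proof -
  let ?N = "card (UNIV :: 'a set) - 1"
  have "\<gamma> ^ ?N = 1"
    using primitive nonzero_power_card_minus_one unfolding primitive_element_def by blast
  then have "\<gamma> ^ (?N * (n div ?N) + n mod ?N) = \<gamma> ^ (n mod ?N)"
    by (simp only: power_add power_mult) simp
  then show ?thesis
    by (simp only: mult_div_mod_eq)
qed

lemma primitive_element_power_surj:
  assumes "x \<noteq> 0"
  shows "\<exists>n < card (UNIV :: 'a set) - 1. x = \<gamma> ^ n"
proof -
  obtain n where "x = \<gamma> ^ n"
    using primitive assms by (auto simp: primitive_element_def)
  then have "x = \<gamma> ^ (n mod (card (UNIV :: 'a set) - 1))"
    using primitive_element_power_mod by (rule trans)
  moreover have "n mod (card (UNIV :: 'a set) - 1) < card (UNIV :: 'a set) - 1"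
    using two_le_card_field[where 'a='a] by simp
  ultimately show ?thesis
    by blast
qed

lemma primitive_element_power_inj_on:
  "inj_on (\<lambda>n. \<gamma> ^ n) {..<card (UNIV :: 'a set) - 1}"
proof (rule eq_card_imp_inj_on)
  let ?N = "card (UNIV :: 'a set) - 1"
  have "(\<lambda>n. \<gamma> ^ n) ` {..<?N} \<subseteq> UNIV - {0}"
    using primitive by (auto simp: primitive_element_def)
  moreover have "UNIV - {0} \<subseteq> (\<lambda>n. \<gamma> ^ n) ` {..<?N}"
    using primitive_element_power_surj by (auto simp: image_iff)
  ultimately have "(\<lambda>n. \<gamma> ^ n) ` {..<?N} = UNIV - {0}"
    by (rule subset_antisym)
  then show "card ((\<lambda>n. \<gamma> ^ n) ` {..<?N}) = card {..<?N}"
    by (simp add: card_Diff_singleton)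
qed simp

lemma primitive_element_power_eq_iff:
  "\<gamma> ^ a = \<gamma> ^ c \<longleftrightarrow> a mod (card (UNIV :: 'a set) - 1) = c mod (card (UNIV :: 'a set) - 1)"
proof -
  let ?N = "card (UNIV :: 'a set) - 1"
  have "?N > 0"
    using two_le_card_field[where 'a='a] by simp
  then show ?thesis
    using inj_onD[OF primitive_element_power_inj_on, of "a mod ?N" "c mod ?N"]
    by (metis lessThan_iff mod_less_divisor primitive_element_power_mod)
qed

lemma all_nonzero_iff_all_powers:
  "(\<forall>x. x \<noteq> 0 \<longrightarrow> P x) \<longleftrightarrow> (\<forall>n < card (UNIV :: 'a set) - 1. P (\<gamma> ^ n))"
  using primitive_element_power_surj primitive by (auto simp: primitive_element_def)

lemma primitive_element_power_power:
  assumes "card (UNIV :: 'a set) - 1 = d * t"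
  shows "(\<gamma> ^ n) ^ t = \<gamma> ^ (t * (n mod d))"
  unfolding power_mult[symmetric] primitive_element_power_eq_iff assms
  by (simp add: mult.commute mult_mod_left)

lemma primitive_element_power_power_eq_iff:
  assumes "card (UNIV :: 'a set) - 1 = d * t" "t > 0"
  shows "(\<gamma> ^ n) ^ t = (\<gamma> ^ n') ^ t \<longleftrightarrow> n mod d = n' mod d"
  unfolding power_mult[symmetric] primitive_element_power_eq_iff assms
  using assms(2) by (simp add: mult_mod_left[symmetric])

lemma nonzero_power_ne_iff:
  assumes N: "card (UNIV :: 'a set) - 1 = d * t"
  shows "(\<forall>x. x \<noteq> 0 \<longrightarrow> x ^ t \<noteq> b) \<longleftrightarrow> (\<forall>s < d. b \<noteq> \<gamma> ^ (t * s))"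
  unfolding all_nonzero_iff_all_powers primitive_element_power_power[OF N]
proof (intro iffI allI impI)
  fix s assume "\<forall>n < card (UNIV :: 'a set) - 1. \<gamma> ^ (t * (n mod d)) \<noteq> b" "s < d"
  moreover have "s < d * t"
    using N \<open>s < d\<close> two_le_card_field[where 'a='a] by (cases t) auto
  ultimately show "b \<noteq> \<gamma> ^ (t * s)"
    using N by auto
next
  fix n assume "\<forall>s < d. b \<noteq> \<gamma> ^ (t * s)" "n < card (UNIV :: 'a set) - 1"
  moreover have "d > 0"
    using N two_le_card_field[where 'a='a] by (cases d) auto
  ultimately show "\<gamma> ^ (t * (n mod d)) \<noteq> b"
    by (metis mod_less_divisor)
qed

lemma pair_condition_iff_exponent_condition:
  assumes N: "card (UNIV :: 'a set) - 1 = 3 * t"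
  shows "(\<forall>x y. x \<noteq> 0 \<longrightarrow> y \<noteq> 0 \<longrightarrow> x ^ t \<noteq> y ^ t \<longrightarrow> b \<noteq> (x * x ^ t + y * y ^ t) / (x + y)) \<longleftrightarrow>
    (\<forall>i i' k k' :: int. 0 \<le> i \<and> i \<le> 2 \<and> 0 \<le> i' \<and> i' \<le> 2 \<and> i \<noteq> i' \<and>
        1 \<le> k \<and> k \<le> int t \<and> 1 \<le> k' \<and> k' \<le> int t \<longrightarrow>
        b \<noteq> \<gamma> powi (int t * i') * (\<gamma> powi (3 * (k - k') + (int t + 1) * (i - i')) + 1) /
              (\<gamma> powi (3 * (k - k') + i - i') + 1))"
    (is "_ \<longleftrightarrow> (\<forall>i i' k k'. _ \<longrightarrow> b \<noteq> ?E i i' k k')")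
proof -
  have "t > 0"
    using N two_le_card_field[where 'a='a] by (cases t) auto
  have \<gamma>_nonzero: "\<gamma> \<noteq> 0"
    using primitive by (simp add: primitive_element_def)
  have quotient: "?E (int (n mod 3)) (int (n' mod 3)) (int (n div 3) + 1) (int (n' div 3) + 1) =
      (\<gamma> ^ n * (\<gamma> ^ n) ^ t + \<gamma> ^ n' * (\<gamma> ^ n') ^ t) / (\<gamma> ^ n + \<gamma> ^ n')" for n n'
  proof -
    let ?e = "\<lambda>n. int (t * (n mod 3))"
    have "int n = 3 * int (n div 3) + int (n mod 3)" "int n' = 3 * int (n' div 3) + int (n' mod 3)"
      by (metis mult_div_mod_eq of_nat_add of_nat_mult of_nat_numeral)+
    then have exponents:
        "3 * (int (n div 3) + 1 - (int (n' div 3) + 1)) + (int t + 1) * (int (n mod 3) - int (n' mod 3)) =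
          int n + ?e n - (int n' + ?e n')"
        "3 * (int (n div 3) + 1 - (int (n' div 3) + 1)) + int (n mod 3) - int (n' mod 3) = int n - int n'"
        "int t * int (n' mod 3) = ?e n'"
      by (simp_all add: algebra_simps)
    have "?E (int (n mod 3)) (int (n' mod 3)) (int (n div 3) + 1) (int (n' div 3) + 1) =
        \<gamma> powi ?e n' * (\<gamma> powi (int n + ?e n - (int n' + ?e n')) + 1) / (\<gamma> powi (int n - int n') + 1)"
      by (simp only: exponents)
    also have "\<dots> = (\<gamma> powi int n * \<gamma> powi ?e n + \<gamma> powi int n' * \<gamma> powi ?e n') / (\<gamma> powi int n + \<gamma> powi int n')"
      by (rule power_int_quotient_eq[OF \<gamma>_nonzero])
    also have "\<dots> = (\<gamma> ^ n * (\<gamma> ^ n) ^ t + \<gamma> ^ n' * (\<gamma> ^ n') ^ t) / (\<gamma> ^ n + \<gamma> ^ n')"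
      by (simp only: power_int_of_nat primitive_element_power_power[OF N])
    finally show ?thesis .
  qed
  have digits: "(\<forall>i k :: int. 0 \<le> i \<and> i \<le> 2 \<and> 1 \<le> k \<and> k \<le> int t \<longrightarrow> P i k) \<longleftrightarrow>
      (\<forall>n < 3 * t. P (int (n mod 3)) (int (n div 3) + 1))" for P
  proof -
    have "i < int 3 \<longleftrightarrow> i \<le> 2" for i :: int
      by linarith
    then show ?thesis
      using all_digits_iff_all_below[of 3 t P] by simp
  qed
  have "(\<forall>x y. x \<noteq> 0 \<longrightarrow> y \<noteq> 0 \<longrightarrow> x ^ t \<noteq> y ^ t \<longrightarrow> b \<noteq> (x * x ^ t + y * y ^ t) / (x + y)) \<longleftrightarrow>
      (\<forall>x. x \<noteq> 0 \<longrightarrow> (\<forall>y. y \<noteq> 0 \<longrightarrow> x ^ t \<noteq> y ^ t \<longrightarrow> b \<noteq> (x * x ^ t + y * y ^ t) / (x + y)))"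
    by blast
  also have "\<dots> \<longleftrightarrow> (\<forall>n < 3 * t. \<forall>n' < 3 * t. (\<gamma> ^ n) ^ t \<noteq> (\<gamma> ^ n') ^ t \<longrightarrow>
        b \<noteq> (\<gamma> ^ n * (\<gamma> ^ n) ^ t + \<gamma> ^ n' * (\<gamma> ^ n') ^ t) / (\<gamma> ^ n + \<gamma> ^ n'))"
    unfolding all_nonzero_iff_all_powers N ..
  also have "\<dots> \<longleftrightarrow> (\<forall>n < 3 * t. \<forall>n' < 3 * t. int (n mod 3) \<noteq> int (n' mod 3) \<longrightarrow>
        b \<noteq> ?E (int (n mod 3)) (int (n' mod 3)) (int (n div 3) + 1) (int (n' div 3) + 1))"
    unfolding quotient primitive_element_power_power_eq_iff[OF N \<open>t > 0\<close>] of_nat_eq_iff ..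
  also have "\<dots> \<longleftrightarrow> (\<forall>i k :: int. 0 \<le> i \<and> i \<le> 2 \<and> 1 \<le> k \<and> k \<le> int t \<longrightarrow>
      (\<forall>i' k' :: int. 0 \<le> i' \<and> i' \<le> 2 \<and> 1 \<le> k' \<and> k' \<le> int t \<longrightarrow> i \<noteq> i' \<longrightarrow> b \<noteq> ?E i i' k k'))"
    unfolding digits ..
  also have "\<dots> \<longleftrightarrow> (\<forall>i i' k k'. 0 \<le> i \<and> i \<le> 2 \<and> 0 \<le> i' \<and> i' \<le> 2 \<and> i \<noteq> i' \<and>
        1 \<le> k \<and> k \<le> int t \<and> 1 \<le> k' \<and> k' \<le> int t \<longrightarrow> b \<noteq> ?E i i' k k')"
    (is "(\<forall>i k. ?R i k \<longrightarrow> (\<forall>i' k'. ?R i' k' \<longrightarrow> i \<noteq> i' \<longrightarrow> _)) \<longleftrightarrow> (\<forall>i i' k k'. ?S i i' k k' \<longrightarrow> _)")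
  proof (intro iffI allI impI)
    fix i i' k k'
    assume "\<forall>i k. ?R i k \<longrightarrow> (\<forall>i' k'. ?R i' k' \<longrightarrow> i \<noteq> i' \<longrightarrow> b \<noteq> ?E i i' k k')" "?S i i' k k'"
    then show "b \<noteq> ?E i i' k k'"
      by (elim allE[of _ i] allE[of _ k] allE[of _ i'] allE[of _ k']) blast
  next
    fix i k i' k'
    assume "\<forall>i i' k k'. ?S i i' k k' \<longrightarrow> b \<noteq> ?E i i' k k'" "?R i k" "?R i' k'" "i \<noteq> i'"
    then show "b \<noteq> ?E i i' k k'"
      by (elim allE[of _ i] allE[of _ i'] allE[of _ k] allE[of _ k']) blast
  qed
  finally show ?thesis .
qed

end

lemma three_dvd_four_power_minus_one: "3 dvd (2 ^ (2 * m) - 1 :: nat)"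
proof -
  have "(4::nat) ^ m mod 3 = (4 mod 3) ^ m mod 3"
    by (rule power_mod[symmetric])
  then have "(2::nat) ^ (2 * m) mod 3 = 1"
    by (simp add: power_mult)
  then show ?thesis
    by (metis dvd_minus_mod minus_mod_eq_mult_div mod_mod_trivial)
qed

theorem proposition3:
  fixes m :: nat and b \<gamma> :: "'a::{field,finite}"
  assumes "m > 0"
    and "card (UNIV :: 'a set) = 2 ^ (2 * m)"
    and "primitive_element \<gamma>"
  defines "t \<equiv> (2 ^ (2 * m) - 1) div 3"
  shows "permutation_polynomial (monom 1 (t + 1) + monom b 1) \<longleftrightarrow>
    ((\<forall>i i' k k' :: int. 0 \<le> i \<and> i \<le> 2 \<and> 0 \<le> i' \<and> i' \<le> 2 \<and> i \<noteq> i' \<and>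
        1 \<le> k \<and> k \<le> int t \<and> 1 \<le> k' \<and> k' \<le> int t \<longrightarrow>
        b \<noteq> \<gamma> powi (int t * i') *
              (\<gamma> powi (3 * (k - k') + ((2 ^ (2 * m) + 2) div 3) * (i - i')) + 1) /
              (\<gamma> powi (3 * (k - k') + i - i') + 1)) \<and>
     (\<forall>s::nat. s \<le> 2 \<longrightarrow> b \<noteq> \<gamma> ^ (t * s)))"
proof -
  have N: "card (UNIV :: 'a set) - 1 = 3 * t"
    using three_dvd_four_power_minus_one[of m] by (simp add: assms(2) t_def)
  have "(2::nat) ^ (2 * m) = 3 * t + 1"
    using N assms(2) zero_less_power[of "2::nat" "2 * m"] by linarith
  then have "(2::int) ^ (2 * m) = 3 * int t + 1"
    by (metis of_nat_1 of_nat_add of_nat_mult of_nat_numeral of_nat_power)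
  then have exponent: "(2 ^ (2 * m) + 2) div 3 = int t + 1"
    by simp
  have char_two: "(-1::'a) = 1"
    using assms(1,2) by (intro minus_one_eq_one_if_even_card) simp
  have "poly (monom 1 (t + 1) + monom b 1) = (\<lambda>x. x * (x ^ t + b))"
    by (simp add: fun_eq_iff poly_monom algebra_simps)
  then have permutation_iff_inj:
      "permutation_polynomial (monom 1 (t + 1) + monom b 1) \<longleftrightarrow> inj (\<lambda>x. x * (x ^ t + b))"
    unfolding permutation_polynomial_def bij_def using finite_UNIV_inj_surj[of "\<lambda>x. x * (x ^ t + b)"] by auto
  have below_3: "s < 3 \<longleftrightarrow> s \<le> 2" for s :: nat
    by linarith
  show ?thesis
    unfolding permutation_iff_inj inj_times_power_add_iff[OF char_two]
      nonzero_power_ne_iff[OF assms(3) N] pair_condition_iff_exponent_condition[OF assms(3) N]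
      exponent below_3
    by (rule conj_commute)
qed

end
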